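(* Let $q=4$ and $n\geq 2$, and let $c>0$ be a real number such that $k=\frac{3n}{8}(\log(3n)+c)$ is an integer. Then $$\Vert \nu_n^{*k}-\pi_n\Vert_{TV}^2\leq \frac94\left(e^{e^{-c}}-1\right).$$
   Context: For integers $n\geq1$, $q\geq2$, the Hamming scheme $H(n,q)$ is the graph with vertex set $X_n=\{0,1,\dots,q-1\}^n$ in which $x$ and $x'$ are adjacent ($x\sim x'$) iff they differ in exactly one coordinate. The simple random walk has transition probability $p_n(x,x')=\frac{1}{n(q-1)}$ if $x\sim x'$ and $0$ otherwise. Let $p_n^{(k)}$ denote the $k$-step transition probability ($p_n^{(0)}(x,x')=\delta_{x,x'}$), $x^{(0)}=(0,\dots,0)$, and $\nu_n^{*k}(x)=p_n^{(k)}(x^{(0)},x)$. $\pi_n$ is the uniform probability measure on $X_n$. For measures $\mu,\nu$ on $X_n$, $\Vert\mu-\nu\Vert_{TV}=\max_{S\subset X_n}|\mu(S)-\nu(S)|$. *)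

theory Defs
  imports Complex_Main "HOL-Library.FuncSet"
begin

definition ham_X :: "nat \<Rightarrow> nat \<Rightarrow> (nat \<Rightarrow> nat) set" where
  "ham_X n q = PiE {..<n} (\<lambda>_. {..<q})"

definition ham_adj :: "nat \<Rightarrow> (nat \<Rightarrow> nat) \<Rightarrow> (nat \<Rightarrow> nat) \<Rightarrow> bool" where
  "ham_adj n x y \<longleftrightarrow> card {i \<in> {..<n}. x i \<noteq> y i} = 1"

definition ham_p :: "nat \<Rightarrow> nat \<Rightarrow> (nat \<Rightarrow> nat) \<Rightarrow> (nat \<Rightarrow> nat) \<Rightarrow> real" where
  "ham_p n q x y = (if ham_adj n x y then 1 / (real n * (real q - 1)) else 0)"

fun ham_pk :: "nat \<Rightarrow> nat \<Rightarrow> nat \<Rightarrow> (nat \<Rightarrow> nat) \<Rightarrow> (nat \<Rightarrow> nat) \<Rightarrow> real" where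
  "ham_pk n q 0 x y = (if x = y then 1 else 0)"
| "ham_pk n q (Suc k) x y = (\<Sum>z\<in>ham_X n q. ham_pk n q k x z * ham_p n q z y)"

definition ham_x0 :: "nat \<Rightarrow> nat \<Rightarrow> nat" where
  "ham_x0 n = restrict (\<lambda>_. 0) {..<n}"

definition ham_nu :: "nat \<Rightarrow> nat \<Rightarrow> nat \<Rightarrow> (nat \<Rightarrow> nat) \<Rightarrow> real" where
  "ham_nu n q k x = ham_pk n q k (ham_x0 n) x"

definition ham_pi :: "nat \<Rightarrow> nat \<Rightarrow> (nat \<Rightarrow> nat) \<Rightarrow> real" where
  "ham_pi n q x = 1 / real (card (ham_X n q))"

definition tv_dist :: "'a set \<Rightarrow> ('a \<Rightarrow> real) \<Rightarrow> ('a \<Rightarrow> real) \<Rightarrow> real" where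
  "tv_dist X \<mu> \<nu> = Max {\<bar>(\<Sum>x\<in>S. \<mu> x) - (\<Sum>x\<in>S. \<nu> x)\<bar> | S. S \<subseteq> X}"

end

theory Submission
  imports Defs "HOL-Analysis.Convex"
begin

text \<open>
  The walk is diagonalised by the functions \<open>\<phi>_S(x) = \<Prod>i\<in>S. h(x i)\<close>, \<open>S \<subseteq> {..<n}\<close>, where
  \<open>h(0) = q - 1\<close> and \<open>h(v) = -1\<close> otherwise. Since \<open>h\<close> sums to zero over \<open>{..<q}\<close>, each \<open>\<phi>_S\<close> is an
  eigenfunction with eigenvalue \<open>\<lambda>_S = 1 - q |S| / (n (q - 1))\<close>; the \<open>\<phi>_S\<close> are orthogonal with
  \<open>\<Sum>x. \<phi>_S(x)\<^sup>2 = q^n (q - 1)^|S|\<close>, and \<open>\<Sum>S. \<phi>_S\<close> is \<open>q^n\<close> times the point mass at the origin.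
  Hence \<open>\<nu>\<^sup>*\<^sup>k - \<pi> = q^-n \<Sum>S\<noteq>{}. \<lambda>_S^k \<phi>_S\<close>, and Cauchy-Schwarz gives the upper bound lemma
  \<open>4 \<parallel>\<nu>\<^sup>*\<^sup>k - \<pi>\<parallel>\<^sup>2 \<le> \<Sum>S\<noteq>{}. (q - 1)^|S| \<lambda>_S^2k\<close>.
  For \<open>q = 4\<close> and \<open>|S| = j\<close>, the term is at most \<open>(e^-c/n)^j\<close> when \<open>4j \<le> 3n\<close> (from \<open>1 - x \<le> e^-x\<close>)
  and at most \<open>3^j / 9^k\<close> otherwise (as then \<open>|\<lambda>_S| \<le> 1/3\<close>). Summing,
  the bound is \<open>(1 + e^-c/n)^n - 1 + 4^n/9^k \<le> exp(e^-c) - 1 + 8 e^-c \<le> 9 (exp(e^-c) - 1)\<close>.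
\<close>

lemma sum_if_mem:
  assumes "finite A" "S \<subseteq> A"
  shows "(\<Sum>i\<in>A. if i \<in> S then a else b) = of_nat (card S) * a + of_nat (card A - card S) * (b :: 'a :: comm_semiring_1)"
proof -
  have "A \<inter> S = S" using assms(2) by auto
  moreover have "card (A - S) = card A - card S"
    using assms by (simp add: card_Diff_subset finite_subset)
  ultimately show ?thesis
    using assms(1) by (subst sum.If_cases) (simp_all add: Collect_mem_eq Diff_eq)
qed

lemma prod_if_mem:
  assumes "finite A" "S \<subseteq> A"
  shows "(\<Prod>i\<in>A. if i \<in> S then a else b) = a ^ card S * (b :: 'a :: comm_monoid_mult) ^ (card A - card S)"
proof -
  have "A \<inter> S = S" using assms(2) by auto
  moreover have "card (A - S) = card A - card S"
    using assms by (simp add: card_Diff_subset finite_subset)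
  ultimately show ?thesis
    using assms(1) by (subst prod.If_cases) (simp_all add: Collect_mem_eq Diff_eq)
qed

lemma sum_lessThan_if_zero:
  assumes "0 < q"
  shows "(\<Sum>v<q. if v = 0 then a else b) = a + of_nat (q - 1) * (b :: 'a :: comm_semiring_1)"
proof -
  have "(\<Sum>v<q. if v = 0 then a else b) = a + (\<Sum>v\<in>{..<q} - {0}. b)"
    using assms by (subst sum.remove[of _ 0]) auto
  thus ?thesis using assms by simp
qed

lemma sum_pow_card_Pow:
  assumes "finite A"
  shows "(\<Sum>S\<in>Pow A. a ^ card S) = (1 + a :: 'a :: comm_semiring_1) ^ card A"
  using prod_add[OF assms, of "\<lambda>_. a" "\<lambda>_. 1"] by (simp add: add.commute)

section \<open>Total variation and the upper bound lemma\<close>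

lemma tv_dist_le_half_sum_abs:
  fixes \<mu> \<nu> :: "'a \<Rightarrow> real"
  assumes "finite X" and balanced: "(\<Sum>x\<in>X. \<mu> x - \<nu> x) = 0"
  shows "tv_dist X \<mu> \<nu> \<le> (\<Sum>x\<in>X. \<bar>\<mu> x - \<nu> x\<bar>) / 2"
proof -
  have "\<bar>(\<Sum>x\<in>S. \<mu> x) - (\<Sum>x\<in>S. \<nu> x)\<bar> \<le> (\<Sum>x\<in>X. \<bar>\<mu> x - \<nu> x\<bar>) / 2" if "S \<subseteq> X" for S
  proof -
    have split: "(\<Sum>x\<in>X. f x) = (\<Sum>x\<in>S. f x) + (\<Sum>x\<in>X - S. f x)" for f :: "'a \<Rightarrow> real"
      using \<open>S \<subseteq> X\<close> \<open>finite X\<close> by (metis sum.subset_diff add.commute)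
    have "\<bar>\<Sum>x\<in>X - S. \<mu> x - \<nu> x\<bar> = \<bar>\<Sum>x\<in>S. \<mu> x - \<nu> x\<bar>"
      using split[of "\<lambda>x. \<mu> x - \<nu> x"] balanced by simp
    moreover have "\<bar>\<Sum>x\<in>S. \<mu> x - \<nu> x\<bar> \<le> (\<Sum>x\<in>S. \<bar>\<mu> x - \<nu> x\<bar>)"
      and "\<bar>\<Sum>x\<in>X - S. \<mu> x - \<nu> x\<bar> \<le> (\<Sum>x\<in>X - S. \<bar>\<mu> x - \<nu> x\<bar>)"
      by (rule sum_abs)+
    ultimately show ?thesis
      using split[of "\<lambda>x. \<bar>\<mu> x - \<nu> x\<bar>"] by (simp add: sum_subtractf)
  qed
  moreover have "finite {\<bar>(\<Sum>x\<in>S. \<mu> x) - (\<Sum>x\<in>S. \<nu> x)\<bar> | S. S \<subseteq> X}"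
    using \<open>finite X\<close> by simp
  ultimately show ?thesis
    unfolding tv_dist_def by (subst Max_le_iff) auto
qed

lemma tv_dist_nonneg:
  assumes "finite X"
  shows "0 \<le> tv_dist X \<mu> \<nu>"
proof -
  have "\<bar>(\<Sum>x\<in>{}. \<mu> x) - (\<Sum>x\<in>{}. \<nu> x)\<bar> \<le> tv_dist X \<mu> \<nu>"
    unfolding tv_dist_def using assms by (intro Max_ge) (auto intro: exI[of _ "{}"])
  thus ?thesis by simp
qed

lemma tv_dist_squared_le:
  fixes \<mu> \<nu> :: "'a \<Rightarrow> real"
  assumes "finite X" "(\<Sum>x\<in>X. \<mu> x - \<nu> x) = 0"
  shows "(tv_dist X \<mu> \<nu>)\<^sup>2 \<le> real (card X) / 4 * (\<Sum>x\<in>X. (\<mu> x - \<nu> x)\<^sup>2)"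
proof -
  have "(tv_dist X \<mu> \<nu>)\<^sup>2 \<le> ((\<Sum>x\<in>X. \<bar>\<mu> x - \<nu> x\<bar>) / 2)\<^sup>2"
    using tv_dist_le_half_sum_abs[OF assms] tv_dist_nonneg[OF assms(1)] by (rule power_mono)
  also have "\<dots> \<le> (\<Sum>x\<in>X. \<bar>\<mu> x - \<nu> x\<bar>\<^sup>2) * real (card X) / 4"
    using sum_squared_le_sum_of_squares[of "\<lambda>x. \<bar>\<mu> x - \<nu> x\<bar>" X]
    by (simp add: power_divide)
  finally show ?thesis by (simp add: mult.commute)
qed

section \<open>The spectrum of the Hamming walk\<close>

lemma finite_ham_X: "finite (ham_X n q)"
  unfolding ham_X_def by (intro finite_PiE) auto

lemma card_ham_X: "card (ham_X n q) = q ^ n"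
  unfolding ham_X_def by (simp add: card_PiE)

lemma ham_X_fun_upd:
  "y \<in> ham_X n q \<Longrightarrow> v < q \<Longrightarrow> y(i := v) \<in> ham_X n q \<longleftrightarrow> i < n \<or> v = y i"
  unfolding ham_X_def by (auto simp: PiE_iff extensional_def)

lemma ham_neighbours:
  assumes y: "y \<in> ham_X n q"
  shows "{z \<in> ham_X n q. ham_adj n z y} = (\<lambda>(i, v). y(i := v)) ` (SIGMA i:{..<n}. {..<q} - {y i})"
proof (intro equalityI subsetI)
  fix z assume "z \<in> {z \<in> ham_X n q. ham_adj n z y}"
  hence z: "z \<in> ham_X n q" and "card {i \<in> {..<n}. z i \<noteq> y i} = 1"
    by (auto simp: ham_adj_def)
  then obtain i where i: "{i \<in> {..<n}. z i \<noteq> y i} = {i}"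
    by (auto simp: card_1_singleton_iff)
  have "z j = y j" if "j \<noteq> i" for j
    using i z y that by (cases "j < n") (auto simp: ham_X_def PiE_def extensional_def)
  hence "z = y(i := z i)" by auto
  moreover have "i < n" "z i \<noteq> y i" using i by auto
  moreover have "z i < q" using z \<open>i < n\<close> by (auto simp: ham_X_def PiE_iff)
  ultimately show "z \<in> (\<lambda>(i, v). y(i := v)) ` (SIGMA i:{..<n}. {..<q} - {y i})"
    by (intro image_eqI[where x = "(i, z i)"]) auto
next
  fix z assume "z \<in> (\<lambda>(i, v). y(i := v)) ` (SIGMA i:{..<n}. {..<q} - {y i})"
  then obtain i v where iv: "i < n" "v < q" "v \<noteq> y i" and z: "z = y(i := v)" by auto
  have "{j \<in> {..<n}. z j \<noteq> y j} = {i}" using iv z by auto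
  thus "z \<in> {z \<in> ham_X n q. ham_adj n z y}"
    using ham_X_fun_upd[OF y] iv z by (simp add: ham_adj_def)
qed

lemma inj_on_fun_upd_Sigma: "inj_on (\<lambda>(i, v). y(i := v)) (SIGMA i:I. A i - {y i})"
proof (rule inj_onI)
  fix p p' assume "p \<in> (SIGMA i:I. A i - {y i})" "p' \<in> (SIGMA i:I. A i - {y i})"
    and "(\<lambda>(i, v). y(i := v)) p = (\<lambda>(i, v). y(i := v)) p'"
  then obtain i v j w where p: "p = (i, v)" "p' = (j, w)" and "v \<noteq> y i"
    and upd: "y(i := v) = y(j := w)" by auto
  hence "i = j" by (metis fun_upd_other fun_upd_same)
  with upd p show "p = p'" by (metis fun_upd_same)
qed

definition coord_char :: "nat \<Rightarrow> nat \<Rightarrow> real" where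
  "coord_char q v = (if v = 0 then real q - 1 else - 1)"

definition ham_eigenfun :: "nat \<Rightarrow> nat set \<Rightarrow> (nat \<Rightarrow> nat) \<Rightarrow> real" where
  "ham_eigenfun q S x = (\<Prod>i\<in>S. coord_char q (x i))"

definition ham_eigenval :: "nat \<Rightarrow> nat \<Rightarrow> nat set \<Rightarrow> real" where
  "ham_eigenval n q S = 1 - real q * real (card S) / (real n * (real q - 1))"

lemma sum_coord_char: "0 < q \<Longrightarrow> (\<Sum>v<q. coord_char q v) = 0"
  unfolding coord_char_def by (simp add: sum_lessThan_if_zero of_nat_diff)

lemma sum_coord_char_squared:
  assumes "0 < q"
  shows "(\<Sum>v<q. (coord_char q v)\<^sup>2) = real q * (real q - 1)"
proof -
  have "(\<Sum>v<q. (coord_char q v)\<^sup>2) = (\<Sum>v<q. if v = 0 then (real q - 1)\<^sup>2 else 1)"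
    by (intro sum.cong) (auto simp: coord_char_def)
  thus ?thesis using assms by (simp add: sum_lessThan_if_zero of_nat_diff power2_eq_square algebra_simps)
qed

lemma ham_eigenfun_empty [simp]: "ham_eigenfun q {} x = 1"
  by (simp add: ham_eigenfun_def)

lemma ham_eigenval_empty [simp]: "ham_eigenval n q {} = 1"
  by (simp add: ham_eigenval_def)

lemma ham_eigenfun_fun_upd:
  assumes "finite S"
  shows "ham_eigenfun q S (y(i := v)) =
    (if i \<in> S then coord_char q v * ham_eigenfun q (S - {i}) y else ham_eigenfun q S y)"
  using assms unfolding ham_eigenfun_def
  by (auto simp: prod.remove[of S i] intro!: prod.cong)

lemma ham_eigenfun_as_prod:
  assumes "S \<subseteq> {..<n}"
  shows "ham_eigenfun q S x = (\<Prod>i<n. if i \<in> S then coord_char q (x i) else 1)"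
  using assms unfolding ham_eigenfun_def by (simp add: prod.If_cases Int_absorb1)

lemma sum_ham_eigenfun_neighbours_at:
  assumes "finite S" "y i < q"
  shows "(\<Sum>v\<in>{..<q} - {y i}. ham_eigenfun q S (y(i := v))) =
    (if i \<in> S then - ham_eigenfun q S y else (real q - 1) * ham_eigenfun q S y)"
proof -
  have "(\<Sum>v\<in>{..<q} - {y i}. ham_eigenfun q S (y(i := v))) =
      (\<Sum>v<q. ham_eigenfun q S (y(i := v))) - ham_eigenfun q S y"
    using assms(2) by (subst sum_diff1) auto
  also have "(\<Sum>v<q. ham_eigenfun q S (y(i := v))) =
      (if i \<in> S then 0 else real q * ham_eigenfun q S y)"
    using assms sum_coord_char[of q]
    by (simp add: ham_eigenfun_fun_upd flip: sum_distrib_right)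
  finally show ?thesis by (cases "i \<in> S") (simp_all add: fun_upd_def algebra_simps)
qed

lemma sum_ham_eigenfun_mult_ham_p:
  assumes "2 \<le> q" "0 < n" "y \<in> ham_X n q" "S \<subseteq> {..<n}"
  shows "(\<Sum>z\<in>ham_X n q. ham_eigenfun q S z * ham_p n q z y) = ham_eigenval n q S * ham_eigenfun q S y"
proof -
  have "finite S" using assms(4) finite_subset by blast
  have y: "y i < q" if "i < n" for i
    using assms(3) that by (auto simp: ham_X_def PiE_iff)
  let ?\<phi> = "ham_eigenfun q S"
  have "(\<Sum>z\<in>ham_X n q. ?\<phi> z * ham_p n q z y) = (\<Sum>z | z \<in> ham_X n q \<and> ham_adj n z y. ?\<phi> z) / (real n * (real q - 1))"
    unfolding ham_p_def
    by (simp add: sum.inter_filter[symmetric] finite_ham_X if_distrib sum_divide_distrib cong: if_cong)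
  also have "(\<Sum>z | z \<in> ham_X n q \<and> ham_adj n z y. ?\<phi> z) =
      (\<Sum>p\<in>(SIGMA i:{..<n}. {..<q} - {y i}). ?\<phi> ((\<lambda>(i, v). y(i := v)) p))"
    unfolding Collect_conj_eq[symmetric] ham_neighbours[OF assms(3)]
    by (rule sum.reindex[OF inj_on_fun_upd_Sigma, unfolded comp_def])
  also have "\<dots> = (\<Sum>i<n. \<Sum>v\<in>{..<q} - {y i}. ?\<phi> (y(i := v)))"
    by (subst sum.Sigma) (auto simp: split_beta)
  also have "\<dots> = (\<Sum>i<n. if i \<in> S then - ?\<phi> y else (real q - 1) * ?\<phi> y)"
    using y \<open>finite S\<close> by (intro sum.cong refl sum_ham_eigenfun_neighbours_at) auto
  also have "\<dots> = (real n * (real q - 1) - real q * real (card S)) * ?\<phi> y"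
    using assms(4) card_mono[OF finite_lessThan assms(4)]
    by (simp add: sum_if_mem of_nat_diff algebra_simps)
  finally show ?thesis
    using assms(1,2) by (simp add: ham_eigenval_def field_simps)
qed

lemma ham_eigenfun_orthogonal:
  assumes "0 < q" "S \<subseteq> {..<n}" "T \<subseteq> {..<n}"
  shows "(\<Sum>x\<in>ham_X n q. ham_eigenfun q S x * ham_eigenfun q T x) =
    (if S = T then real q ^ n * (real q - 1) ^ card S else 0)"
proof -
  define e where "e i v = (if i \<in> S then coord_char q v else 1) * (if i \<in> T then coord_char q v else 1)" for i v
  have "(\<Sum>x\<in>ham_X n q. ham_eigenfun q S x * ham_eigenfun q T x) = (\<Sum>x\<in>ham_X n q. \<Prod>i<n. e i (x i))"
    unfolding ham_eigenfun_as_prod[OF assms(2)] ham_eigenfun_as_prod[OF assms(3)] e_def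
    by (simp add: prod.distrib)
  also have "\<dots> = (\<Prod>i<n. \<Sum>v<q. e i v)"
    unfolding ham_X_def by (subst prod_sum_PiE) auto
  also have "\<dots> = (\<Prod>i<n. if i \<in> S \<and> i \<in> T then real q * (real q - 1)
                           else if i \<in> S \<or> i \<in> T then 0 else real q)"
    using sum_coord_char[OF assms(1)] sum_coord_char_squared[OF assms(1)]
    by (intro prod.cong) (auto simp: e_def power2_eq_square)
  also have "\<dots> = (if S = T then real q ^ n * (real q - 1) ^ card S else 0)"
  proof (cases "S = T")
    case True
    have "(\<Prod>i<n. if i \<in> S \<and> i \<in> T then real q * (real q - 1) else if i \<in> S \<or> i \<in> T then 0 else real q)
        = (\<Prod>i<n. if i \<in> S then real q * (real q - 1) else real q)"
      using True by (intro prod.cong) auto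
    moreover have "card S \<le> n" using assms(2) by (metis card_lessThan card_mono finite_lessThan)
    hence "real q ^ n = real q ^ card S * real q ^ (n - card S)"
      by (simp flip: power_add)
    ultimately show ?thesis
      using True assms(2) by (simp add: prod_if_mem power_mult_distrib)
  next
    case False
    then obtain i where "i \<in> S \<and> i \<notin> T \<or> i \<in> T \<and> i \<notin> S" by blast
    moreover from this have "i < n" using assms by auto
    ultimately show ?thesis using False by (intro trans[OF prod_zero]) auto
  qed
  finally show ?thesis .
qed

lemma sum_ham_eigenfun:
  assumes "x \<in> ham_X n q"
  shows "(\<Sum>S\<in>Pow {..<n}. ham_eigenfun q S x) = (if x = ham_x0 n then real q ^ n else 0)"
proof -
  have "(\<Sum>S\<in>Pow {..<n}. ham_eigenfun q S x) = (\<Prod>i<n. coord_char q (x i) + 1)"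
    unfolding ham_eigenfun_def by (subst prod_add) auto
  also have "\<dots> = (\<Prod>i<n. if x i = 0 then real q else 0)"
    by (intro prod.cong) (auto simp: coord_char_def)
  also have "\<dots> = (if x = ham_x0 n then real q ^ n else 0)"
  proof (cases "x = ham_x0 n")
    case False
    have "\<exists>i<n. x i \<noteq> 0"
    proof (rule ccontr)
      assume "\<not> (\<exists>i<n. x i \<noteq> 0)"
      hence "x = ham_x0 n"
        using assms by (auto simp: ham_x0_def ham_X_def PiE_def extensional_def fun_eq_iff)
      thus False using False by contradiction
    qed
    then obtain i where "i < n" "x i \<noteq> 0" by blast
    thus ?thesis using False by (intro trans[OF prod_zero]) auto
  qed (simp add: ham_x0_def)
  finally show ?thesis .
qed

lemma ham_nu_expansion:
  assumes "2 \<le> q" "0 < n" "x \<in> ham_X n q"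
  shows "ham_nu n q k x = (\<Sum>S\<in>Pow {..<n}. ham_eigenval n q S ^ k * ham_eigenfun q S x) / real q ^ n"
  using assms(3) unfolding ham_nu_def
proof (induction k arbitrary: x)
  case 0
  thus ?case using assms(1) by (simp add: sum_ham_eigenfun eq_commute[of "ham_x0 n"])
next
  case (Suc k)
  have "ham_pk n q (Suc k) (ham_x0 n) x =
      (\<Sum>z\<in>ham_X n q. \<Sum>S\<in>Pow {..<n}. ham_eigenval n q S ^ k * (ham_eigenfun q S z * ham_p n q z x)) / real q ^ n"
    using Suc.IH by (simp add: sum_divide_distrib sum_distrib_right mult.assoc)
  also have "\<dots> = (\<Sum>S\<in>Pow {..<n}. ham_eigenval n q S ^ k *
                     (\<Sum>z\<in>ham_X n q. ham_eigenfun q S z * ham_p n q z x)) / real q ^ n"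
    by (subst sum.swap) (simp add: sum_distrib_left)
  also have "\<dots> = (\<Sum>S\<in>Pow {..<n}. ham_eigenval n q S ^ Suc k * ham_eigenfun q S x) / real q ^ n"
    using sum_ham_eigenfun_mult_ham_p[OF assms(1,2) Suc.prems] by (intro arg_cong[where f = "\<lambda>t. t / _"] sum.cong) auto
  finally show ?case .
qed

lemma ham_nu_minus_pi:
  assumes "2 \<le> q" "0 < n" "x \<in> ham_X n q"
  shows "ham_nu n q k x - ham_pi n q x =
    (\<Sum>S\<in>Pow {..<n} - {{}}. ham_eigenval n q S ^ k * ham_eigenfun q S x) / real q ^ n"
proof -
  have "(\<Sum>S\<in>Pow {..<n}. ham_eigenval n q S ^ k * ham_eigenfun q S x) =
      1 + (\<Sum>S\<in>Pow {..<n} - {{}}. ham_eigenval n q S ^ k * ham_eigenfun q S x)"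
    by (subst sum.remove[of _ "{}"]) auto
  thus ?thesis
    using assms by (simp add: ham_nu_expansion ham_pi_def card_ham_X add_divide_distrib)
qed

lemma sum_ham_nu_minus_pi:
  assumes "2 \<le> q" "0 < n"
  shows "(\<Sum>x\<in>ham_X n q. ham_nu n q k x - ham_pi n q x) = 0"
proof -
  have "(\<Sum>x\<in>ham_X n q. ham_nu n q k x - ham_pi n q x) =
      (\<Sum>S\<in>Pow {..<n} - {{}}. ham_eigenval n q S ^ k *
         (\<Sum>x\<in>ham_X n q. ham_eigenfun q S x * ham_eigenfun q {} x)) / real q ^ n"
    using assms by (simp add: ham_nu_minus_pi sum_distrib_left sum_divide_distrib[symmetric])
                   (rule sum.swap)
  also have "\<dots> = 0"
    using assms by (subst sum.neutral) (auto simp: ham_eigenfun_orthogonal simp del: ham_eigenfun_empty)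
  finally show ?thesis .
qed

lemma sum_squared_ham_nu_minus_pi:
  assumes "2 \<le> q" "0 < n"
  shows "(\<Sum>x\<in>ham_X n q. (ham_nu n q k x - ham_pi n q x)\<^sup>2) =
    (\<Sum>S\<in>Pow {..<n} - {{}}. (real q - 1) ^ card S * ham_eigenval n q S ^ (2 * k)) / real q ^ n"
proof -
  let ?P = "Pow {..<n} - {{}}" and ?ev = "\<lambda>S. ham_eigenval n q S ^ k"
  have "(\<Sum>x\<in>ham_X n q. (ham_nu n q k x - ham_pi n q x)\<^sup>2) =
      (\<Sum>x\<in>ham_X n q. \<Sum>S\<in>?P. \<Sum>T\<in>?P. ?ev S * ?ev T * (ham_eigenfun q S x * ham_eigenfun q T x))
        / (real q ^ n * real q ^ n)"
    using assms by (simp add: ham_nu_minus_pi power2_eq_square sum_product sum_divide_distrib mult_ac)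
  also have "\<dots> = (\<Sum>S\<in>?P. \<Sum>T\<in>?P. ?ev S * ?ev T *
                     (\<Sum>x\<in>ham_X n q. ham_eigenfun q S x * ham_eigenfun q T x)) / (real q ^ n * real q ^ n)"
    by (simp add: sum_distrib_left sum.swap[of _ "ham_X n q"])
  also have "\<dots> = (\<Sum>S\<in>?P. ?ev S * ?ev S * (real q ^ n * (real q - 1) ^ card S)) / (real q ^ n * real q ^ n)"
    using assms
    by (intro arg_cong[where f = "\<lambda>t. t / _"] sum.cong refl)
       (auto simp: ham_eigenfun_orthogonal if_distrib[where f = "\<lambda>t. _ * t"] sum.delta cong: if_cong)
  also have "\<dots> = (\<Sum>S\<in>?P. (real q - 1) ^ card S * ham_eigenval n q S ^ (2 * k)) / real q ^ n"
    unfolding sum_divide_distrib using assms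
    by (intro sum.cong refl) (simp add: mult_2 power_add)
  finally show ?thesis .
qed

theorem ham_tv_dist_squared_le:
  assumes "2 \<le> q" "0 < n"
  shows "(tv_dist (ham_X n q) (ham_nu n q k) (ham_pi n q))\<^sup>2 \<le>
    (\<Sum>S\<in>Pow {..<n} - {{}}. (real q - 1) ^ card S * ham_eigenval n q S ^ (2 * k)) / 4"
  using tv_dist_squared_le[OF finite_ham_X sum_ham_nu_minus_pi[OF assms]] assms
  by (simp add: sum_squared_ham_nu_minus_pi card_ham_X)

section \<open>The estimate for \<open>q = 4\<close>\<close>

lemma exp_le_nine_pow: "exp (2 * real k) \<le> 9 ^ k"
proof -
  have "exp (2 * real k) = (exp 1 ^ 2) ^ k"
    by (simp flip: exp_of_nat_mult power_mult)
  also have "\<dots> \<le> (3 ^ 2) ^ k"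
    using exp_le by (intro power_mono) auto
  finally show ?thesis by simp
qed

lemma four_le_exp_three_halves: "4 \<le> exp (3 / 2 :: real)"
proof -
  have "(1 + (3 / 2) / real 10) ^ 10 \<le> exp (3 / 2 :: real)"
    by (rule exp_ge_one_plus_x_over_n_power_n) auto
  thus ?thesis by (simp add: power_def)
qed

lemma four_pow_le_exp:
  assumes "2 \<le> n"
  shows "4 ^ n \<le> 8 * exp (3 * real n / 4 * ln (3 * real n))"
proof (cases "n = 2")
  case True
  have "exp 1 \<le> (6 :: real)" using exp_le by simp
  hence "1 \<le> ln (6 :: real)" by (subst ln_ge_iff) auto
  hence "1 + 3 / 2 \<le> 1 + 3 * real n / 4 * ln (3 * real n)"
    using True by simp
  also have "\<dots> \<le> exp (3 * real n / 4 * ln (3 * real n))"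
    by (rule exp_ge_add_one_self)
  finally show ?thesis using True by simp
next
  case False
  have "9 \<le> 3 * real n" using False assms by simp
  hence "exp 2 \<le> 3 * real n"
    using exp_le_nine_pow[of 1] by simp
  hence "2 \<le> ln (3 * real n)" using assms by (subst ln_ge_iff) auto
  have "(4 :: real) ^ n \<le> exp (3 / 2) ^ n"
    using four_le_exp_three_halves by (intro power_mono) auto
  also have "\<dots> = exp (3 * real n / 4 * 2)"
    by (simp flip: exp_of_nat_mult)
  also have "\<dots> \<le> exp (3 * real n / 4 * ln (3 * real n))"
    using mult_left_mono[OF \<open>2 \<le> ln (3 * real n)\<close>, of "real n"] by simp
  finally show ?thesis using exp_ge_zero[of "3 * real n / 4 * ln (3 * real n)"] by linarith
qed

lemma four_pow_div_nine_pow_le: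
  assumes "2 \<le> n" "0 < c" "real k = 3 * real n / 8 * (ln (3 * real n) + c)"
  shows "4 ^ n / 9 ^ k \<le> 8 * exp (- c)"
proof -
  have "c \<le> 3 * real n / 4 * c" using assms(1,2) by simp
  hence "3 * real n / 4 * ln (3 * real n) + c \<le> 2 * real k"
    using assms(3) by (simp add: algebra_simps)
  hence "exp (3 * real n / 4 * ln (3 * real n) + c) \<le> 9 ^ k"
    using exp_le_nine_pow[of k] by (meson exp_le_cancel_iff order_trans)
  hence "exp (3 * real n / 4 * ln (3 * real n)) * exp c \<le> 9 ^ k"
    by (simp add: exp_add)
  have "4 ^ n * exp c \<le> 8 * exp (3 * real n / 4 * ln (3 * real n)) * exp c"
    using four_pow_le_exp[OF assms(1)] by (intro mult_right_mono) auto
  also have "\<dots> \<le> 8 * 9 ^ k"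
    using \<open>exp (3 * real n / 4 * ln (3 * real n)) * exp c \<le> 9 ^ k\<close> by simp
  finally show ?thesis by (simp add: exp_minus field_simps)
qed

lemma three_pow_mult_power_le:
  fixes n j k :: nat and u :: real
  assumes "0 < n" "j \<le> n" "0 \<le> u" and u: "exp (- 8 * real k / (3 * real n)) = u / (3 * real n)"
  shows "3 ^ j * (1 - 4 * real j / (3 * real n)) ^ (2 * k) \<le> (u / real n) ^ j + 3 ^ j / 9 ^ k"
proof -
  define x where "x = 4 * real j / (3 * real n)"
  show ?thesis
  proof (cases "x \<le> 1")
    case True
    have "(1 - x) ^ (2 * k) \<le> exp (- x) ^ (2 * k)"
      using True exp_ge_add_one_self[of "- x"] by (intro power_mono) auto
    also have "\<dots> = exp (real (2 * k) * (- x))"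
      by (rule exp_of_nat_mult[symmetric])
    also have "real (2 * k) * (- x) = real j * (- 8 * real k / (3 * real n))"
      using assms(1) by (simp add: x_def field_simps)
    also have "exp \<dots> = (u / (3 * real n)) ^ j"
      by (simp only: exp_of_nat_mult u)
    finally have "3 ^ j * (1 - x) ^ (2 * k) \<le> 3 ^ j * (u / (3 * real n)) ^ j"
      by simp
    also have "\<dots> = (u / real n) ^ j"
      by (simp flip: power_mult_distrib)
    finally show ?thesis unfolding x_def by (simp add: add_increasing2)
  next
    case False
    have "x \<le> 4 / 3" using assms(1,2) by (simp add: x_def field_simps)
    hence "(x - 1)\<^sup>2 \<le> (1 / 3)\<^sup>2"
      using False by (intro power_mono) auto
    hence "(1 - x)\<^sup>2 \<le> 1 / 9"
      by (simp add: power2_commute power_divide)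
    hence "((1 - x)\<^sup>2) ^ k \<le> (1 / 9) ^ k"
      by (intro power_mono) auto
    hence "3 ^ j * (1 - x) ^ (2 * k) \<le> 3 ^ j / 9 ^ k"
      by (simp add: power_mult power_one_over divide_simps)
    moreover have "0 \<le> (u / real n) ^ j" using assms(3) by simp
    ultimately show ?thesis unfolding x_def by linarith
  qed
qed

lemma sum_three_pow_mult_ham_eigenval_le:
  assumes "2 \<le> n" "0 < c" and k: "real k = 3 * real n / 8 * (ln (3 * real n) + c)"
  shows "(\<Sum>S\<in>Pow {..<n} - {{}}. 3 ^ card S * ham_eigenval n 4 S ^ (2 * k)) \<le> 9 * (exp (exp (- c)) - 1)"
proof -
  define u where "u = exp (- c)"
  have "0 < n" "0 \<le> u" using assms(1) by (auto simp: u_def)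
  have u: "exp (- 8 * real k / (3 * real n)) = u / (3 * real n)"
  proof -
    have "- 8 * real k / (3 * real n) = - c - ln (3 * real n)"
      using \<open>0 < n\<close> unfolding k by (simp add: field_simps)
    thus ?thesis using \<open>0 < n\<close> by (simp add: u_def exp_diff)
  qed
  let ?P = "Pow {..<n} - {{}}"
  have "(\<Sum>S\<in>?P. 3 ^ card S * ham_eigenval n 4 S ^ (2 * k)) \<le>
      (\<Sum>S\<in>?P. (u / real n) ^ card S + 3 ^ card S / 9 ^ k)"
  proof (intro sum_mono)
    fix S assume "S \<in> ?P"
    hence "card S \<le> n" by (metis DiffD1 PowD card_lessThan card_mono finite_lessThan)
    moreover have "ham_eigenval n 4 S = 1 - 4 * real (card S) / (3 * real n)"
      by (simp add: ham_eigenval_def mult.commute)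
    ultimately show "3 ^ card S * ham_eigenval n 4 S ^ (2 * k) \<le> (u / real n) ^ card S + 3 ^ card S / 9 ^ k"
      using three_pow_mult_power_le[OF \<open>0 < n\<close> _ \<open>0 \<le> u\<close> u] by simp
  qed
  also have "\<dots> = (\<Sum>S\<in>?P. (u / real n) ^ card S) + (\<Sum>S\<in>?P. 3 ^ card S / 9 ^ k)"
    by (rule sum.distrib)
  also have "(\<Sum>S\<in>?P. (u / real n) ^ card S) = (1 + u / real n) ^ n - 1"
    using sum_pow_card_Pow[of "{..<n}" "u / real n"] by (subst sum_diff1) auto
  also have "(\<Sum>S\<in>?P. 3 ^ card S / 9 ^ k) \<le> (\<Sum>S\<in>Pow {..<n}. (3 :: real) ^ card S / 9 ^ k)"
    by (intro sum_mono2) auto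
  also have "\<dots> = 4 ^ n / 9 ^ k"
    using sum_pow_card_Pow[of "{..<n}" "3 :: real"] by (simp flip: sum_divide_distrib)
  also have "(1 + u / real n) ^ n \<le> exp u"
    using \<open>0 < n\<close> \<open>0 \<le> u\<close> by (intro exp_ge_one_plus_x_over_n_power_n) auto
  also have "4 ^ n / 9 ^ k \<le> 8 * u"
    unfolding u_def by (rule four_pow_div_nine_pow_le[OF assms])
  also have "exp u - 1 + 8 * u \<le> 9 * (exp u - 1)"
    using exp_ge_add_one_self[of u] by argo
  finally show ?thesis unfolding u_def by simp
qed

theorem theorem1p2:
  fixes n k :: nat and c :: real
  assumes "n \<ge> 2" and "c > 0"
    and "real k = 3 * real n / 8 * (ln (3 * real n) + c)"
  shows "(tv_dist (ham_X n 4) (ham_nu n 4 k) (ham_pi n 4))\<^sup>2 \<le> 9 / 4 * (exp (exp (- c)) - 1)"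
proof -
  have "(tv_dist (ham_X n 4) (ham_nu n 4 k) (ham_pi n 4))\<^sup>2 \<le>
      (\<Sum>S\<in>Pow {..<n} - {{}}. (real 4 - 1) ^ card S * ham_eigenval n 4 S ^ (2 * k)) / 4"
    using assms(1) by (intro ham_tv_dist_squared_le) auto
  also have "\<dots> \<le> 9 * (exp (exp (- c)) - 1) / 4"
    using sum_three_pow_mult_ham_eigenval_le[OF assms] by simp
  finally show ?thesis by simp
qed

end
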